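(* Let $Q_k$ be a $K$-subset system and $(X,\tau)$ a $T_0$ space. Then $X$ is $k$-well-filtered if and only if the map $\lambda:X\to K(X)$, $\lambda(x)=[\{x\}]$, is a homeomorphism.
   Context: $Q(X)$: nonempty compact saturated subsets of $X$; a family is filtered if nonempty and any two members contain a third. A $C$-subset system $Q_k$ assigns to each $T_0$ space $X$ a set $Q_k(X)$ with $\{\uparrow x\mid x\in X\}\subseteq Q_k(X)\subseteq Q(X)$. A nonempty $A\subseteq X$ is $k$-Rudin if for some filtered $\mathcal K\subseteq Q_k(X)$, $\overline A$ is a minimal closed set meeting every member of $\mathcal K$; $\mathrm{K}^R(X)$ is the set of $k$-Rudin sets. $Q_k$ is a $K$-subset system if for all $T_0$ spaces $X,Y$, continuous $f:X\to Y$ and $A\in\mathrm K^R(X)$, $f(A)\in\mathrm K^R(Y)$. $X$ is $k$-well-filtered if for every open $U$ and filtered $\mathcal K\subseteq Q_k(X)$, $\bigcap\mathcal K\subseteq U$ implies $K\subseteq U$ for some $K\in\mathcal K$. On $\mathrm K^R(X)$ put $A\sim B$ iff $\overline A=\overline B$; $K(X)$ is the set of classes $[A]$, topologized by the open sets $U^*=\{[A]\mid A\cap U\ne\emptyset\}$, $U\in\tau$. *)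

theory Defs
  imports "HOL-Analysis.Analysis"
begin

text \<open>Upper set of a point in the specialization order: y is above x iff x is in the closure of y.\<close>
definition upset :: "'a topology \<Rightarrow> 'a \<Rightarrow> 'a set" where
  "upset X x = {y \<in> topspace X. x \<in> X closure_of {y}}"

definition saturated :: "'a topology \<Rightarrow> 'a set \<Rightarrow> bool" where
  "saturated X K \<longleftrightarrow> K \<subseteq> topspace X \<and> K = \<Inter>{U. openin X U \<and> K \<subseteq> U} \<inter> topspace X"

definition Qset :: "'a topology \<Rightarrow> 'a set set" where
  "Qset X = {K. K \<noteq> {} \<and> compactin X K \<and> saturated X K}"

definition filtered :: "'a set set \<Rightarrow> bool" where
  "filtered F \<longleftrightarrow> F \<noteq> {} \<and> (\<forall>A\<in>F. \<forall>B\<in>F. \<exists>C\<in>F. C \<subseteq> A \<inter> B)"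

text \<open>A C-subset system on the T0 spaces carried by the type 'a.\<close>
definition C_subset_system :: "('a topology \<Rightarrow> 'a set set) \<Rightarrow> bool" where
  "C_subset_system Qk \<longleftrightarrow>
     (\<forall>X. t0_space X \<longrightarrow> {upset X x | x. x \<in> topspace X} \<subseteq> Qk X \<and> Qk X \<subseteq> Qset X)"

definition KR :: "('a topology \<Rightarrow> 'a set set) \<Rightarrow> 'a topology \<Rightarrow> 'a set set" where
  "KR Qk X = {A. A \<subseteq> topspace X \<and> A \<noteq> {} \<and>
     (\<exists>\<K>. \<K> \<subseteq> Qk X \<and> filtered \<K> \<and>
        (\<forall>K\<in>\<K>. X closure_of A \<inter> K \<noteq> {}) \<and>
        (\<forall>B. closedin X B \<and> B \<subseteq> X closure_of A \<and> (\<forall>K\<in>\<K>. B \<inter> K \<noteq> {})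
             \<longrightarrow> B = X closure_of A))}"

definition K_subset_system :: "('a topology \<Rightarrow> 'a set set) \<Rightarrow> bool" where
  "K_subset_system Qk \<longleftrightarrow> C_subset_system Qk \<and>
     (\<forall>X Y f A. t0_space X \<and> t0_space Y \<and> continuous_map X Y f \<and> A \<in> KR Qk X
        \<longrightarrow> f ` A \<in> KR Qk Y)"

definition k_well_filtered :: "('a topology \<Rightarrow> 'a set set) \<Rightarrow> 'a topology \<Rightarrow> bool" where
  "k_well_filtered Qk X \<longleftrightarrow>
     (\<forall>U \<K>. openin X U \<and> \<K> \<subseteq> Qk X \<and> filtered \<K> \<and> \<Inter>\<K> \<subseteq> U \<longrightarrow> (\<exists>K\<in>\<K>. K \<subseteq> U))"

definition Kclass :: "('a topology \<Rightarrow> 'a set set) \<Rightarrow> 'a topology \<Rightarrow> 'a set \<Rightarrow> 'a set set" where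
  "Kclass Qk X A = {B \<in> KR Qk X. X closure_of B = X closure_of A}"

definition Kpoints :: "('a topology \<Rightarrow> 'a set set) \<Rightarrow> 'a topology \<Rightarrow> 'a set set set" where
  "Kpoints Qk X = Kclass Qk X ` KR Qk X"

definition Kstar :: "('a topology \<Rightarrow> 'a set set) \<Rightarrow> 'a topology \<Rightarrow> 'a set \<Rightarrow> 'a set set set" where
  "Kstar Qk X U = {Kclass Qk X A | A. A \<in> KR Qk X \<and> A \<inter> U \<noteq> {}}"

definition Ktop :: "('a topology \<Rightarrow> 'a set set) \<Rightarrow> 'a topology \<Rightarrow> 'a set set topology" where
  "Ktop Qk X = topology_generated_by {Kstar Qk X U | U. openin X U}"

definition Klambda :: "('a topology \<Rightarrow> 'a set set) \<Rightarrow> 'a topology \<Rightarrow> 'a \<Rightarrow> 'a set set" where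
  "Klambda Qk X x = Kclass Qk X {x}"

end

theory Submission
  imports Defs
begin

text \<open>
  Both conditions say that every k-Rudin set is the closure of a point.
  If X is k-well-filtered and A is k-Rudin with witnessing filtered family \<open>\<K>\<close>, then
  \<open>\<Inter>\<K>\<close> cannot lie in the open complement of \<open>cl A\<close>, and any point of \<open>cl A \<inter> \<Inter>\<K>\<close>
  generates \<open>cl A\<close> by minimality. Conversely, if no member of a filtered \<open>\<K> \<subseteq> Q\<^sub>k(X)\<close>
  lies in an open U, Zorn's lemma and compactness give a minimal closed subset of \<open>X - U\<close>
  meeting every member of \<open>\<K>\<close>; it is k-Rudin, and its generic point lies in every member
  of \<open>\<K>\<close> because these are saturated, so \<open>\<Inter>\<K>\<close> is not contained in U.
  On the other side, \<open>\<lambda>\<close> is always a continuous injection with \<open>\<lambda>\<inverse>(U\<^sup>*) = U\<close>;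
  it is surjective exactly when every k-Rudin set has a generic point, and then it maps
  U onto \<open>U\<^sup>*\<close>, so it is open.
\<close>

lemma saturated_upward_closed:
  assumes "saturated X K" "x \<in> K" "x \<in> X closure_of {y}" "y \<in> topspace X"
  shows "y \<in> K"
proof -
  have "y \<in> U" if "openin X U" "K \<subseteq> U" for U
    using assms(2,3) that openin_Int_closure_of_eq_empty[OF that(1), of "{y}"] by blast
  moreover have "K = \<Inter>{U. openin X U \<and> K \<subseteq> U} \<inter> topspace X"
    using assms(1) unfolding saturated_def by (rule conjunct2)
  ultimately show ?thesis
    using assms(4) by (metis (no_types, lifting) IntI InterI mem_Collect_eq)
qed

lemma compactin_Int_Inter_closed_chain:
  assumes K: "compactin X K" and chain: "subset.chain \<A> \<C>" and "\<C> \<noteq> {}"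
    and closed: "\<And>C. C \<in> \<C> \<Longrightarrow> closedin X C" and meets: "\<And>C. C \<in> \<C> \<Longrightarrow> C \<inter> K \<noteq> {}"
  shows "K \<inter> \<Inter>\<C> \<noteq> {}"
proof -
  have fip: "\<And>\<U>. \<lbrakk>\<forall>C\<in>\<U>. closedin X C; \<forall>\<F>. finite \<F> \<and> \<F> \<subseteq> \<U> \<longrightarrow> K \<inter> \<Inter>\<F> \<noteq> {}\<rbrakk>
              \<Longrightarrow> K \<inter> \<Inter>\<U> \<noteq> {}"
    using K unfolding compactin_fip by blast
  show ?thesis
  proof (rule fip)
    show "\<forall>C\<in>\<C>. closedin X C"
      using closed by blast
    show "\<forall>\<F>. finite \<F> \<and> \<F> \<subseteq> \<C> \<longrightarrow> K \<inter> \<Inter>\<F> \<noteq> {}"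
    proof (intro allI impI, elim conjE)
      fix \<F> assume "finite \<F>" "\<F> \<subseteq> \<C>"
      show "K \<inter> \<Inter>\<F> \<noteq> {}"
      proof (cases "\<F> = {}")
        case True
        then show ?thesis
          using meets \<open>\<C> \<noteq> {}\<close> by auto
      next
        case False
        have "subset.chain \<C> \<F>"
          using chain \<open>\<F> \<subseteq> \<C>\<close> unfolding subset_chain_def by blast
        then have "\<Inter>\<F> \<in> \<C>"
          using Inter_in_chain[OF \<open>finite \<F>\<close> False] \<open>\<F> \<subseteq> \<C>\<close> by blast
        then show ?thesis
          using meets[OF \<open>\<Inter>\<F> \<in> \<C>\<close>] by (simp add: Int_commute)
      qed
    qed
  qed
qed

lemma subset_Zorn_Inter_nonempty:
  assumes "\<A> \<noteq> {}" and ch: "\<And>\<C>. \<lbrakk>\<C> \<noteq> {}; subset.chain \<A> \<C>\<rbrakk> \<Longrightarrow> \<Inter>\<C> \<in> \<A>"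
  shows "\<exists>M\<in>\<A>. \<forall>B\<in>\<A>. B \<subseteq> M \<longrightarrow> B = M"
proof -
  have "\<exists>N\<in>uminus ` \<A>. \<forall>V\<in>uminus ` \<A>. N \<subseteq> V \<longrightarrow> V = N"
  proof (rule subset_Zorn_nonempty)
    show "uminus ` \<A> \<noteq> {}"
      using assms(1) by simp
  next
    fix \<V> assume "\<V> \<noteq> {}" and chain: "subset.chain (uminus ` \<A>) \<V>"
    then have "uminus ` \<V> \<noteq> {}" "subset.chain \<A> (uminus ` \<V>)"
      unfolding subset_chain_def by (auto simp: image_subset_iff)
    then have "\<Inter>(uminus ` \<V>) \<in> \<A>"
      by (rule ch)
    moreover have "\<Union>\<V> = - \<Inter>(uminus ` \<V>)"
      by auto
    ultimately show "\<Union>\<V> \<in> uminus ` \<A>"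
      by (metis image_eqI)
  qed
  then obtain M where M: "M \<in> \<A>" and max: "\<And>B. B \<in> \<A> \<Longrightarrow> - M \<subseteq> - B \<Longrightarrow> - B = - M"
    by auto
  show ?thesis
  proof (intro bexI ballI impI)
    fix B assume "B \<in> \<A>" "B \<subseteq> M"
    then show "B = M"
      using max[of B] by simp
  qed (fact M)
qed

lemma exists_minimal_closed_meeting_compacts:
  assumes compact: "\<And>K. K \<in> \<K> \<Longrightarrow> compactin X K"
    and "closedin X C" and "\<And>K. K \<in> \<K> \<Longrightarrow> C \<inter> K \<noteq> {}"
  obtains B where "closedin X B" "B \<subseteq> C" "\<And>K. K \<in> \<K> \<Longrightarrow> B \<inter> K \<noteq> {}"
    "\<And>B'. \<lbrakk>closedin X B'; B' \<subseteq> B; \<forall>K\<in>\<K>. B' \<inter> K \<noteq> {}\<rbrakk> \<Longrightarrow> B' = B"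
proof -
  define \<B> where "\<B> = {B. closedin X B \<and> B \<subseteq> C \<and> (\<forall>K\<in>\<K>. B \<inter> K \<noteq> {})}"
  have "\<exists>M\<in>\<B>. \<forall>B\<in>\<B>. B \<subseteq> M \<longrightarrow> B = M"
  proof (rule subset_Zorn_Inter_nonempty)
    show "\<B> \<noteq> {}"
      using assms unfolding \<B>_def by blast
  next
    fix \<C> assume "\<C> \<noteq> {}" and chain: "subset.chain \<B> \<C>"
    then have \<C>: "\<C> \<subseteq> \<B>"
      unfolding subset_chain_def by blast
    have "K \<inter> \<Inter>\<C> \<noteq> {}" if "K \<in> \<K>" for K
      by (rule compactin_Int_Inter_closed_chain[OF compact[OF that] chain \<open>\<C> \<noteq> {}\<close>])
        (use \<C> that in \<open>auto simp: \<B>_def\<close>)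
    moreover have "closedin X (\<Inter>\<C>)" "\<Inter>\<C> \<subseteq> C"
      using \<C> \<open>\<C> \<noteq> {}\<close> unfolding \<B>_def by blast+
    ultimately show "\<Inter>\<C> \<in> \<B>"
      unfolding \<B>_def by (auto simp: Int_commute)
  qed
  then obtain B where B: "B \<in> \<B>" and minimal: "\<And>B'. \<lbrakk>B' \<in> \<B>; B' \<subseteq> B\<rbrakk> \<Longrightarrow> B' = B"
    by blast
  show thesis
  proof (rule that)
    show "closedin X B" "B \<subseteq> C" "\<And>K. K \<in> \<K> \<Longrightarrow> B \<inter> K \<noteq> {}"
      using B unfolding \<B>_def by auto
    fix B' assume B': "closedin X B'" "B' \<subseteq> B" "\<forall>K\<in>\<K>. B' \<inter> K \<noteq> {}"
    then have "B' \<in> \<B>"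
      using B unfolding \<B>_def by blast
    then show "B' = B"
      using minimal B'(2) by blast
  qed
qed

lemma
  assumes "C_subset_system Qk" "t0_space X"
  shows upset_in_Qk: "x \<in> topspace X \<Longrightarrow> upset X x \<in> Qk X"
    and Qk_subset_Qset: "Qk X \<subseteq> Qset X"
  using assms unfolding C_subset_system_def by blast+

lemma saturated_subset_topspace: "saturated X K \<Longrightarrow> K \<subseteq> topspace X"
  unfolding saturated_def by (rule conjunct1)

lemma Qk_compactin_saturated:
  assumes "C_subset_system Qk" "t0_space X" "K \<in> Qk X"
  shows "compactin X K" "saturated X K"
  using assms Qk_subset_Qset unfolding Qset_def by blast+

lemma mem_upset: "x \<in> topspace X \<Longrightarrow> x \<in> upset X x"
  unfolding upset_def using closure_of_subset[of "{x}" X] by auto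

lemma singleton_in_KR:
  assumes "C_subset_system Qk" "t0_space X" and x: "x \<in> topspace X"
  shows "{x} \<in> KR Qk X"
proof -
  have "B = X closure_of {x}"
    if B: "closedin X B" "B \<subseteq> X closure_of {x}" "B \<inter> upset X x \<noteq> {}" for B
  proof -
    obtain y where "y \<in> B" "x \<in> X closure_of {y}"
      using B(3) unfolding upset_def by auto
    then have "x \<in> B"
      using B(1) closure_of_minimal[of "{y}" B X] by blast
    then show ?thesis
      using B(1,2) closure_of_minimal[of "{x}" B X] by blast
  qed
  moreover have "X closure_of {x} \<inter> upset X x \<noteq> {}"
    using mem_upset[OF x] closure_of_subset[of "{x}" X] x by auto
  ultimately show ?thesis
    unfolding KR_def filtered_def using x upset_in_Qk[OF assms]
    by (intro CollectI conjI exI[of _ "{upset X x}"]) auto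
qed

lemma minimal_closed_meeting_in_KR:
  assumes \<K>: "\<K> \<subseteq> Qk X" "filtered \<K>" and B: "closedin X B" "\<forall>K\<in>\<K>. B \<inter> K \<noteq> {}"
    and minimal: "\<And>B'. \<lbrakk>closedin X B'; B' \<subseteq> B; \<forall>K\<in>\<K>. B' \<inter> K \<noteq> {}\<rbrakk> \<Longrightarrow> B' = B"
  shows "B \<in> KR Qk X"
proof -
  have "B \<noteq> {}"
    using \<K>(2) B(2) unfolding filtered_def by blast
  moreover have "\<forall>B'. closedin X B' \<and> B' \<subseteq> B \<and> (\<forall>K\<in>\<K>. B' \<inter> K \<noteq> {}) \<longrightarrow> B' = B"
    using minimal by blast
  ultimately show ?thesis
    unfolding KR_def mem_Collect_eq closure_of_closedin[OF B(1)]
    using closedin_subset[OF B(1)] \<K> B(2) by (intro conjI exI[of _ \<K>])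
qed

lemma KR_subset_topspace: "A \<in> KR Qk X \<Longrightarrow> A \<subseteq> topspace X"
  unfolding KR_def mem_Collect_eq by (rule conjunct1)

lemma KR_nonempty: "A \<in> KR Qk X \<Longrightarrow> A \<noteq> {}"
  unfolding KR_def mem_Collect_eq by (elim conjE)

lemma Kclass_eq_iff:
  "\<lbrakk>A \<in> KR Qk X; B \<in> KR Qk X\<rbrakk> \<Longrightarrow>
     Kclass Qk X A = Kclass Qk X B \<longleftrightarrow> X closure_of A = X closure_of B"
  unfolding Kclass_def by blast

lemma k_well_filtered_closedin_Int_Inter:
  assumes C: "C_subset_system Qk" "t0_space X" and kwf: "k_well_filtered Qk X"
    and \<K>: "\<K> \<subseteq> Qk X" "filtered \<K>"
    and F: "closedin X F" "\<forall>K\<in>\<K>. F \<inter> K \<noteq> {}"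
  shows "F \<inter> \<Inter>\<K> \<noteq> {}"
proof
  assume disjoint: "F \<inter> \<Inter>\<K> = {}"
  obtain K0 where "K0 \<in> \<K>"
    using \<K>(2) unfolding filtered_def by blast
  moreover have "K0 \<subseteq> topspace X"
    using \<open>K0 \<in> \<K>\<close> \<K>(1) Qk_compactin_saturated[OF C] saturated_subset_topspace by blast
  ultimately have "\<Inter>\<K> \<subseteq> topspace X - F"
    using disjoint by blast
  moreover have "openin X (topspace X - F)"
    using F(1) by (simp add: openin_diff)
  ultimately obtain K where "K \<in> \<K>" "K \<subseteq> topspace X - F"
    using kwf[unfolded k_well_filtered_def, rule_format, of "topspace X - F" \<K>] \<K> by blast
  then show False
    using F(2) by blast
qed

definition KR_has_generic_points :: "('a topology \<Rightarrow> 'a set set) \<Rightarrow> 'a topology \<Rightarrow> bool" where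
  "KR_has_generic_points Qk X \<longleftrightarrow>
     (\<forall>A\<in>KR Qk X. \<exists>x\<in>topspace X. X closure_of A = X closure_of {x})"

lemma k_well_filtered_imp_KR_has_generic_points:
  assumes C: "C_subset_system Qk" "t0_space X" and kwf: "k_well_filtered Qk X"
  shows "KR_has_generic_points Qk X"
  unfolding KR_has_generic_points_def
proof
  fix A assume "A \<in> KR Qk X"
  then obtain \<K> where \<K>: "\<K> \<subseteq> Qk X" "filtered \<K>" "\<forall>K\<in>\<K>. X closure_of A \<inter> K \<noteq> {}"
    and minimal: "\<forall>B. closedin X B \<and> B \<subseteq> X closure_of A \<and> (\<forall>K\<in>\<K>. B \<inter> K \<noteq> {})
                    \<longrightarrow> B = X closure_of A"
    unfolding KR_def mem_Collect_eq by (elim conjE exE) (rule that)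
  have "X closure_of A \<inter> \<Inter>\<K> \<noteq> {}"
    using k_well_filtered_closedin_Int_Inter[OF C kwf \<K>(1,2) closedin_closure_of \<K>(3)] .
  then obtain x where x: "x \<in> X closure_of A" "x \<in> \<Inter>\<K>"
    by (meson IntE ex_in_conv)
  have "x \<in> topspace X"
    using x(1) closure_of_subset_topspace by fast
  have "X closure_of {x} \<subseteq> X closure_of A"
    using x(1) by (simp add: closure_of_minimal)
  moreover have "\<forall>K\<in>\<K>. X closure_of {x} \<inter> K \<noteq> {}"
    using x(2) closure_of_subset[of "{x}" X] \<open>x \<in> topspace X\<close> by blast
  ultimately have "X closure_of {x} = X closure_of A"
    using minimal closedin_closure_of by blast
  then show "\<exists>x\<in>topspace X. X closure_of A = X closure_of {x}"
    using \<open>x \<in> topspace X\<close> by auto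
qed

lemma KR_has_generic_points_imp_k_well_filtered:
  assumes C: "C_subset_system Qk" "t0_space X" and generic: "KR_has_generic_points Qk X"
  shows "k_well_filtered Qk X"
  unfolding k_well_filtered_def
proof (intro allI impI)
  fix U \<K> assume "openin X U \<and> \<K> \<subseteq> Qk X \<and> filtered \<K> \<and> \<Inter>\<K> \<subseteq> U"
  then have U: "openin X U" "\<Inter>\<K> \<subseteq> U" and \<K>: "\<K> \<subseteq> Qk X" "filtered \<K>"
    by auto
  have compact: "compactin X K" and sat: "saturated X K" if "K \<in> \<K>" for K
    using that \<K>(1) Qk_compactin_saturated[OF C] by blast+
  show "\<exists>K\<in>\<K>. K \<subseteq> U"
  proof (rule ccontr)
    assume "\<not> (\<exists>K\<in>\<K>. K \<subseteq> U)"
    then have meets: "\<And>K. K \<in> \<K> \<Longrightarrow> (topspace X - U) \<inter> K \<noteq> {}"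
      using saturated_subset_topspace[OF sat] by blast
    have closed: "closedin X (topspace X - U)"
      using U(1) by (simp add: closedin_diff)
    obtain B where B: "closedin X B" "B \<subseteq> topspace X - U" "\<And>K. K \<in> \<K> \<Longrightarrow> B \<inter> K \<noteq> {}"
      and minimal: "\<And>B'. \<lbrakk>closedin X B'; B' \<subseteq> B; \<forall>K\<in>\<K>. B' \<inter> K \<noteq> {}\<rbrakk> \<Longrightarrow> B' = B"
      using exists_minimal_closed_meeting_compacts[OF compact closed meets] by blast
    have "B \<in> KR Qk X"
      using minimal_closed_meeting_in_KR[of \<K> Qk X B] \<K> B(1,3) minimal by blast
    then obtain x where x: "x \<in> topspace X" "B = X closure_of {x}"
      using generic closure_of_closedin[OF B(1)] unfolding KR_has_generic_points_def by metis
    have "x \<in> K" if K: "K \<in> \<K>" for K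
    proof -
      obtain y where "y \<in> K" "y \<in> X closure_of {x}"
        using B(3)[OF K] x(2) by blast
      then show ?thesis
        using saturated_upward_closed[OF sat[OF K]] x(1) by blast
    qed
    moreover have "x \<in> B"
      using x closure_of_subset[of "{x}" X] by blast
    ultimately show False
      using B(2) U(2) by blast
  qed
qed

lemma k_well_filtered_iff_KR_has_generic_points:
  "\<lbrakk>C_subset_system Qk; t0_space X\<rbrakk> \<Longrightarrow> k_well_filtered Qk X \<longleftrightarrow> KR_has_generic_points Qk X"
  using k_well_filtered_imp_KR_has_generic_points KR_has_generic_points_imp_k_well_filtered
  by blast

lemma Kstar_subset_Kpoints: "Kstar Qk X U \<subseteq> Kpoints Qk X"
  unfolding Kstar_def Kpoints_def by blast

lemma topspace_Ktop: "topspace (Ktop Qk X) = Kpoints Qk X"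
proof -
  have "Kpoints Qk X \<subseteq> Kstar Qk X (topspace X)"
  proof
    fix P assume "P \<in> Kpoints Qk X"
    then obtain A where A: "A \<in> KR Qk X" "P = Kclass Qk X A"
      unfolding Kpoints_def by blast
    then have "A \<inter> topspace X \<noteq> {}"
      using KR_subset_topspace[OF A(1)] KR_nonempty[OF A(1)] by blast
    then show "P \<in> Kstar Qk X (topspace X)"
      unfolding Kstar_def using A by blast
  qed
  then have "\<Union>{Kstar Qk X U | U. openin X U} = Kpoints Qk X"
    using Kstar_subset_Kpoints openin_topspace[of X] by blast
  then show ?thesis
    unfolding Ktop_def topology_generated_by_topspace .
qed

lemma Klambda_mem_Kstar_iff:
  assumes C: "C_subset_system Qk" "t0_space X" and x: "x \<in> topspace X" and U: "openin X U"
  shows "Klambda Qk X x \<in> Kstar Qk X U \<longleftrightarrow> x \<in> U"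
proof
  assume "x \<in> U"
  then show "Klambda Qk X x \<in> Kstar Qk X U"
    unfolding Kstar_def Klambda_def using singleton_in_KR[OF C x] by blast
next
  assume "Klambda Qk X x \<in> Kstar Qk X U"
  then obtain A where A: "A \<in> KR Qk X" "A \<inter> U \<noteq> {}" "Kclass Qk X {x} = Kclass Qk X A"
    unfolding Kstar_def Klambda_def by blast
  then have "X closure_of {x} = X closure_of A"
    using Kclass_eq_iff[OF singleton_in_KR[OF C x] A(1)] by blast
  then have "U \<inter> {x} \<noteq> {}"
    using A(2) openin_Int_closure_of_eq_empty[OF U] by (metis Int_commute)
  then show "x \<in> U"
    by blast
qed

lemma continuous_map_Klambda:
  assumes "C_subset_system Qk" "t0_space X"
  shows "continuous_map X (Ktop Qk X) (Klambda Qk X)"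
  unfolding Ktop_def
proof (rule continuous_on_generated_topo)
  fix V assume "V \<in> {Kstar Qk X U | U. openin X U}"
  then obtain U where U: "V = Kstar Qk X U" "openin X U"
    by blast
  then have "Klambda Qk X -` V \<inter> topspace X = U"
    using Klambda_mem_Kstar_iff[OF assms _ U(2)] openin_subset[OF U(2)] by blast
  then show "openin X (Klambda Qk X -` V \<inter> topspace X)"
    using U(2) by simp
next
  show "Klambda Qk X ` topspace X \<subseteq> \<Union>{Kstar Qk X U | U. openin X U}"
    using Klambda_mem_Kstar_iff[OF assms _ openin_topspace] by blast
qed

lemma inj_on_Klambda:
  assumes "C_subset_system Qk" "t0_space X"
  shows "inj_on (Klambda Qk X) (topspace X)"
proof (rule inj_onI)
  fix x y assume xy: "x \<in> topspace X" "y \<in> topspace X" "Klambda Qk X x = Klambda Qk X y"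
  then have "X closure_of {x} = X closure_of {y}"
    using Kclass_eq_iff[OF singleton_in_KR[OF assms xy(1)] singleton_in_KR[OF assms xy(2)]]
    unfolding Klambda_def by blast
  then show "x = y"
    using assms(2) xy(1,2) unfolding t0_space_closure_of_sing by blast
qed

lemma Klambda_image_eq_Kpoints_iff:
  assumes C: "C_subset_system Qk" "t0_space X"
  shows "Klambda Qk X ` topspace X = Kpoints Qk X \<longleftrightarrow> KR_has_generic_points Qk X"
  unfolding KR_has_generic_points_def
proof (intro iffI ballI)
  fix A assume image: "Klambda Qk X ` topspace X = Kpoints Qk X" and A: "A \<in> KR Qk X"
  then have "Kclass Qk X A \<in> Klambda Qk X ` topspace X"
    unfolding Kpoints_def by blast
  then obtain x where x: "x \<in> topspace X" "Kclass Qk X A = Kclass Qk X {x}"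
    unfolding Klambda_def by blast
  then show "\<exists>x\<in>topspace X. X closure_of A = X closure_of {x}"
    using Kclass_eq_iff[OF A singleton_in_KR[OF C x(1)]] by blast
next
  assume generic: "\<forall>A\<in>KR Qk X. \<exists>x\<in>topspace X. X closure_of A = X closure_of {x}"
  show "Klambda Qk X ` topspace X = Kpoints Qk X"
  proof
    show "Klambda Qk X ` topspace X \<subseteq> Kpoints Qk X"
      unfolding Klambda_def Kpoints_def using singleton_in_KR[OF C] by blast
    show "Kpoints Qk X \<subseteq> Klambda Qk X ` topspace X"
    proof
      fix P assume "P \<in> Kpoints Qk X"
      then obtain A where A: "A \<in> KR Qk X" "P = Kclass Qk X A"
        unfolding Kpoints_def by blast
      then obtain x where x: "x \<in> topspace X" "X closure_of A = X closure_of {x}"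
        using generic by blast
      then have "P = Klambda Qk X x"
        using Kclass_eq_iff[OF A(1) singleton_in_KR[OF C x(1)]] A(2) unfolding Klambda_def by blast
      then show "P \<in> Klambda Qk X ` topspace X"
        using x(1) by blast
    qed
  qed
qed

lemma Klambda_image_openin:
  assumes C: "C_subset_system Qk" "t0_space X"
    and generic: "KR_has_generic_points Qk X" and U: "openin X U"
  shows "Klambda Qk X ` U = Kstar Qk X U"
proof
  show "Klambda Qk X ` U \<subseteq> Kstar Qk X U"
    using Klambda_mem_Kstar_iff[OF C _ U] openin_subset[OF U] by blast
  show "Kstar Qk X U \<subseteq> Klambda Qk X ` U"
  proof
    fix P assume P: "P \<in> Kstar Qk X U"
    have "Klambda Qk X ` topspace X = Kpoints Qk X"
      using Klambda_image_eq_Kpoints_iff[OF C] generic by simp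
    then have "P \<in> Klambda Qk X ` topspace X"
      using Kstar_subset_Kpoints[of Qk X U] P by blast
    then obtain x where x: "x \<in> topspace X" "P = Klambda Qk X x"
      by blast
    then have "x \<in> U"
      using Klambda_mem_Kstar_iff[OF C x(1) U] P by simp
    then show "P \<in> Klambda Qk X ` U"
      using x(2) by blast
  qed
qed

lemma homeomorphic_map_Klambda_iff:
  assumes C: "C_subset_system Qk" "t0_space X"
  shows "homeomorphic_map X (Ktop Qk X) (Klambda Qk X) \<longleftrightarrow> KR_has_generic_points Qk X"
proof
  assume "homeomorphic_map X (Ktop Qk X) (Klambda Qk X)"
  then have "Klambda Qk X ` topspace X = Kpoints Qk X"
    unfolding topspace_Ktop[symmetric] by (rule homeomorphic_imp_surjective_map)
  then show "KR_has_generic_points Qk X"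
    using Klambda_image_eq_Kpoints_iff[OF C] by simp
next
  assume generic: "KR_has_generic_points Qk X"
  have "open_map X (Ktop Qk X) (Klambda Qk X)"
    unfolding open_map_def
  proof (intro allI impI)
    fix U assume "openin X U"
    then show "openin (Ktop Qk X) (Klambda Qk X ` U)"
      unfolding Klambda_image_openin[OF C generic \<open>openin X U\<close>] Ktop_def
      by (blast intro: topology_generated_by_Basis)
  qed
  moreover have "Klambda Qk X ` topspace X = topspace (Ktop Qk X)"
    unfolding topspace_Ktop using Klambda_image_eq_Kpoints_iff[OF C] generic by simp
  ultimately show "homeomorphic_map X (Ktop Qk X) (Klambda Qk X)"
    by (rule bijective_open_imp_homeomorphic_map[OF continuous_map_Klambda[OF C] _ _ inj_on_Klambda[OF C]])
qed

theorem lemma4: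
  fixes Qk :: "'a topology \<Rightarrow> 'a set set" and X :: "'a topology"
  assumes "K_subset_system Qk"
    and "t0_space X"
  shows "k_well_filtered Qk X \<longleftrightarrow> homeomorphic_map X (Ktop Qk X) (Klambda Qk X)"
proof -
  have C: "C_subset_system Qk"
    using assms(1) unfolding K_subset_system_def by blast
  show ?thesis
    using k_well_filtered_iff_KR_has_generic_points[OF C assms(2)]
      homeomorphic_map_Klambda_iff[OF C assms(2)] by simp
qed

end
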